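(* Let $(U,\mathcal{I})$ be a downward-closed set system (with $U$ finite) that is not a matroid. Then there exist a set $V\subseteq U$ and an element $x\in V$ such that the revenue of the VCG mechanism on bid profile $\mathbb{1}[V\setminus\{x\}]$ exceeds the revenue of the VCG mechanism on bid profile $\mathbb{1}[V]$.
   Context: Bidders are the elements of $U$, and $\mathcal{I}$ is the feasibility constraint (sets of bidders that may simultaneously win). A set system with $\emptyset\in\mathcal{I}$ is downward-closed if subsets of members are members, and a matroid if moreover whenever $A,B\in\mathcal{I}$ with $|A|>|B|$ there is $x\in A\setminus B$ with $B\cup\{x\}\in\mathcal{I}$. For $S\subseteq U$, $\mathbb{1}[S]$ denotes the bid profile in which each bidder in $S$ bids $1$ and each bidder in $U\setminus S$ bids $0$. The (single-parameter) VCG mechanism selects as winners a feasible set maximizing the total bid (with ties broken arbitrarily), and charges each winner its critical bid, i.e. the infimum of bids at which it would still belong to a maximum-total-bid feasible set with the other bids fixed (equivalently its VCG externality); losers pay $0$. Revenue is the sum of payments. *)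

theory Defs
  imports Complex_Main
begin

definition downward_closed :: "'a set \<Rightarrow> 'a set set \<Rightarrow> bool" where
  "downward_closed U I \<longleftrightarrow> I \<subseteq> Pow U \<and> {} \<in> I \<and> (\<forall>A\<in>I. \<forall>B. B \<subseteq> A \<longrightarrow> B \<in> I)"

definition is_matroid :: "'a set \<Rightarrow> 'a set set \<Rightarrow> bool" where
  "is_matroid U I \<longleftrightarrow> downward_closed U I \<and>
     (\<forall>A\<in>I. \<forall>B\<in>I. card A > card B \<longrightarrow> (\<exists>x\<in>A - B. insert x B \<in> I))"

definition unit_bids :: "'a set \<Rightarrow> 'a \<Rightarrow> real" where
  "unit_bids S = (\<lambda>i. if i \<in> S then 1 else 0)"

text \<open>W is a possible VCG winner set under bids b: a feasible set of maximum total bid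
  (any such set may be chosen; ties are broken arbitrarily).\<close>
definition vcg_alloc :: "'a set set \<Rightarrow> ('a \<Rightarrow> real) \<Rightarrow> 'a set \<Rightarrow> bool" where
  "vcg_alloc I b W \<longleftrightarrow> W \<in> I \<and> (\<forall>W'\<in>I. sum b W' \<le> sum b W)"

definition critical_bid :: "'a set set \<Rightarrow> ('a \<Rightarrow> real) \<Rightarrow> 'a \<Rightarrow> real" where
  "critical_bid I b i = Inf {t::real. 0 \<le> t \<and> (\<exists>W. vcg_alloc I (b(i := t)) W \<and> i \<in> W)}"

definition vcg_revenue :: "'a set set \<Rightarrow> ('a \<Rightarrow> real) \<Rightarrow> 'a set \<Rightarrow> real" where
  "vcg_revenue I b W = (\<Sum>i\<in>W. critical_bid I b i)"

end

theory Submission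
  imports Defs
begin

text \<open>Under a 0/1 profile 1[V] the VCG winners are the feasible sets W maximising
  |W \<inter> V|, i.e. attaining the rank of V. A winner pays 1 exactly when it bids 1 and is not
  essential (contained in every such set), so the revenue is rank V minus the number of
  essential bidders of V. Take a smallest V on which augmentation fails, witnessed by a
  maximal but not maximum feasible B \<subseteq> V, and a maximum feasible A \<subseteq> V. Minimality forces
  rank (V - {z}) = |B| for z \<in> V - B, so every element of A - B, of which there are at least
  two, is essential. Removing one of them, x, lowers the rank by one, while the essential
  bidders of V - {x} lose x and every other element of A - B (B is optimal for V - {x}).
  Hence the revenue strictly increases.\<close>

definition rank :: "'a set set \<Rightarrow> 'a set \<Rightarrow> nat" where
  "rank I V = Max ((\<lambda>S. card (S \<inter> V)) ` I)"

definition max_feasible :: "'a set set \<Rightarrow> 'a set \<Rightarrow> 'a set \<Rightarrow> bool" where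
  "max_feasible I V W \<longleftrightarrow> W \<in> I \<and> card (W \<inter> V) = rank I V"

definition essential :: "'a set set \<Rightarrow> 'a set \<Rightarrow> 'a set" where
  "essential I V = {i \<in> V. \<forall>W. max_feasible I V W \<longrightarrow> i \<in> W}"

definition augmentation_fails :: "'a set set \<Rightarrow> 'a set \<Rightarrow> bool" where
  "augmentation_fails I V \<longleftrightarrow>
     (\<exists>B\<in>I. B \<subseteq> V \<and> card B < rank I V \<and> (\<forall>y\<in>V - B. insert y B \<notin> I))"

lemma sum_unit_bids: "finite S \<Longrightarrow> sum (unit_bids V) S = real (card (S \<inter> V))"
  by (simp add: unit_bids_def sum.If_cases Int_def)

lemma sum_unit_bids_update:
  assumes "finite S" "i \<in> V"
  shows "sum ((unit_bids V)(i := t)) S = real (card (S \<inter> V)) - (if i \<in> S then 1 - t else 0)"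
proof (cases "i \<in> S")
  case True
  have "sum ((unit_bids V)(i := t)) S = t + sum ((unit_bids V)(i := t)) (S - {i})"
    by (simp only: sum.remove[OF assms(1) True] fun_upd_same)
  also have "sum ((unit_bids V)(i := t)) (S - {i}) = sum (unit_bids V) (S - {i})"
    by (intro sum.cong) auto
  also have "\<dots> = real (card (S \<inter> V - {i}))"
    using assms by (simp add: sum_unit_bids Int_Diff[symmetric] Diff_Int_distrib2)
  also have "\<dots> = real (card (S \<inter> V)) - 1"
  proof -
    have "0 < card (S \<inter> V)" using assms True by (auto simp: card_gt_0_iff)
    then show ?thesis using assms True by (simp add: card_Diff_singleton)
  qed
  finally show ?thesis using True by simp
next
  case False
  then have "sum ((unit_bids V)(i := t)) S = sum (unit_bids V) S"
    by (intro sum.cong) auto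
  then show ?thesis using False assms by (simp add: sum_unit_bids)
qed

lemma critical_bid_eq_minimum:
  assumes "0 \<le> t" "vcg_alloc I (b(i := t)) W" "i \<in> W"
    and "\<And>t' W'. 0 \<le> t' \<Longrightarrow> vcg_alloc I (b(i := t')) W' \<Longrightarrow> i \<in> W' \<Longrightarrow> t \<le> t'"
  shows "critical_bid I b i = t"
  unfolding critical_bid_def using assms by (intro cInf_eq_minimum) auto

locale finite_downward_closed =
  fixes U :: "'a set" and I :: "'a set set"
  assumes finite_ground: "finite U" and downward_closed: "downward_closed U I"
begin

lemma feasible_subset_ground: "S \<in> I \<Longrightarrow> S \<subseteq> U"
  using downward_closed by (auto simp: downward_closed_def)

lemma feasible_subset: "S \<in> I \<Longrightarrow> T \<subseteq> S \<Longrightarrow> T \<in> I"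
  using downward_closed by (auto simp: downward_closed_def)

lemma finite_feasible: "S \<in> I \<Longrightarrow> finite S"
  using feasible_subset_ground finite_ground finite_subset by blast

lemma finite_system: "finite I"
  using downward_closed finite_ground finite_subset[of I "Pow U"] by (simp add: downward_closed_def)

lemma empty_feasible: "{} \<in> I"
  using downward_closed by (simp add: downward_closed_def)

lemma card_le_rank: "S \<in> I \<Longrightarrow> card (S \<inter> V) \<le> rank I V"
  unfolding rank_def using finite_system by (intro Max_ge) auto

lemma ex_max_feasible: "\<exists>W. max_feasible I V W"
proof -
  have "rank I V \<in> (\<lambda>S. card (S \<inter> V)) ` I"
    unfolding rank_def using finite_system empty_feasible by (intro Max_in) auto
  then show ?thesis by (auto simp: max_feasible_def)
qed

lemma ex_max_feasible_subset: "\<exists>A. A \<in> I \<and> A \<subseteq> V \<and> card A = rank I V"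
proof -
  obtain W where "max_feasible I V W" using ex_max_feasible by blast
  then show ?thesis
    by (intro exI[of _ "W \<inter> V"]) (auto simp: max_feasible_def intro: feasible_subset)
qed

lemma max_feasible_iff: "max_feasible I V W \<longleftrightarrow> W \<in> I \<and> (\<forall>S\<in>I. card (S \<inter> V) \<le> card (W \<inter> V))"
proof
  assume "W \<in> I \<and> (\<forall>S\<in>I. card (S \<inter> V) \<le> card (W \<inter> V))"
  moreover obtain W0 where "max_feasible I V W0" using ex_max_feasible by blast
  ultimately show "max_feasible I V W"
    using card_le_rank[of W V] by (force simp: max_feasible_def)
qed (auto simp: max_feasible_def card_le_rank)

lemma finite_essential: "finite (essential I V)"
proof -
  obtain W where W: "max_feasible I V W" using ex_max_feasible by blast
  then have "essential I V \<subseteq> W" by (auto simp: essential_def)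
  then show ?thesis using W finite_feasible finite_subset by (auto simp: max_feasible_def)
qed

lemma vcg_alloc_unit_bids_iff: "vcg_alloc I (unit_bids V) W \<longleftrightarrow> max_feasible I V W"
  using finite_feasible by (auto simp: vcg_alloc_def max_feasible_iff sum_unit_bids)

lemma critical_bid_unit_bids:
  assumes W: "max_feasible I V W" "i \<in> W"
  shows "critical_bid I (unit_bids V) i = (if i \<in> V - essential I V then 1 else 0)"
proof -
  have alloc_W: "vcg_alloc I (unit_bids V) W"
    using W by (simp add: vcg_alloc_unit_bids_iff)
  have WI: "W \<in> I" and card_W: "card (W \<inter> V) = rank I V"
    using W by (auto simp: max_feasible_def)
  consider "i \<notin> V" | "i \<in> essential I V" | "i \<in> V - essential I V" by blast
  then show ?thesis
  proof cases
    case 1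
    then have "(unit_bids V)(i := 0) = unit_bids V" by (auto simp: unit_bids_def)
    then show ?thesis
      using 1 alloc_W W by (auto intro: critical_bid_eq_minimum[where W = W])
  next
    case 2
    then have iV: "i \<in> V" by (simp add: essential_def)
    have "vcg_alloc I ((unit_bids V)(i := 0)) W"
      unfolding vcg_alloc_def
    proof (intro conjI ballI WI)
      fix S assume SI: "S \<in> I"
      have "card (S \<inter> V) < rank I V" if "i \<notin> S"
        using 2 that card_le_rank[OF SI, of V] SI
        by (auto simp: essential_def max_feasible_def)
      moreover have "sum ((unit_bids V)(i := 0)) S
          = real (card (S \<inter> V)) - (if i \<in> S then 1 else 0)"
        using sum_unit_bids_update[OF finite_feasible[OF SI] iV, of 0] by simp
      moreover have "sum ((unit_bids V)(i := 0)) W = real (rank I V) - 1"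
        using sum_unit_bids_update[OF finite_feasible[OF WI] iV, of 0] W card_W by simp
      ultimately show "sum ((unit_bids V)(i := 0)) S \<le> sum ((unit_bids V)(i := 0)) W"
        using card_le_rank[OF SI, of V] by (cases "i \<in> S") simp_all
    qed
    then show ?thesis
      using 2 W by (auto intro: critical_bid_eq_minimum[where W = W])
  next
    case 3
    then obtain S where S: "max_feasible I V S" "i \<notin> S" and iV: "i \<in> V"
      by (auto simp: essential_def)
    have "(unit_bids V)(i := 1) = unit_bids V" using iV by (auto simp: unit_bids_def)
    then have "critical_bid I (unit_bids V) i = 1"
    proof (intro critical_bid_eq_minimum[where W = W])
      fix t W' assume W': "vcg_alloc I ((unit_bids V)(i := t)) W'" "i \<in> W'"
      have "S \<in> I" "W' \<in> I" using S W' by (auto simp: max_feasible_def vcg_alloc_def)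
      then have "sum ((unit_bids V)(i := t)) S \<le> sum ((unit_bids V)(i := t)) W'"
        using W' by (auto simp: vcg_alloc_def)
      moreover have "sum ((unit_bids V)(i := t)) S = real (rank I V)"
        using sum_unit_bids_update[OF finite_feasible[OF \<open>S \<in> I\<close>] iV, of t] S
        by (simp add: max_feasible_def)
      moreover have "sum ((unit_bids V)(i := t)) W' = real (card (W' \<inter> V)) - (1 - t)"
        using sum_unit_bids_update[OF finite_feasible[OF \<open>W' \<in> I\<close>] iV, of t] W' by simp
      ultimately show "1 \<le> t"
        using card_le_rank[OF \<open>W' \<in> I\<close>, of V] by linarith
    qed (use alloc_W W in auto)
    then show ?thesis using 3 by simp
  qed
qed

lemma vcg_revenue_unit_bids:
  assumes "vcg_alloc I (unit_bids V) W"
  shows "vcg_revenue I (unit_bids V) W = real (rank I V) - real (card (essential I V))"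
proof -
  have W: "max_feasible I V W" using assms by (simp add: vcg_alloc_unit_bids_iff)
  then have finW: "finite W" and card_W: "card (W \<inter> V) = rank I V"
    by (auto simp: max_feasible_def finite_feasible)
  have ess_W: "essential I V \<subseteq> W \<inter> V" using W by (auto simp: essential_def)
  have "vcg_revenue I (unit_bids V) W = sum (unit_bids (V - essential I V)) W"
    unfolding vcg_revenue_def
  proof (intro sum.cong refl)
    fix i assume "i \<in> W"
    show "critical_bid I (unit_bids V) i = unit_bids (V - essential I V) i"
      unfolding critical_bid_unit_bids[OF W \<open>i \<in> W\<close>] by (simp add: unit_bids_def)
  qed
  also have "\<dots> = real (card (W \<inter> V - essential I V))"
    by (simp add: sum_unit_bids finW Int_Diff)
  also have "\<dots> = real (rank I V) - real (card (essential I V))"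
    using ess_W finW card_W card_mono[of "W \<inter> V" "essential I V"] finite_essential
    by (simp add: card_Diff_subset)
  finally show ?thesis .
qed

lemma rank_le_rank_Diff_singleton: "rank I V \<le> Suc (rank I (V - {x}))"
proof -
  obtain W where W: "max_feasible I V W" using ex_max_feasible by blast
  have "card (W \<inter> V) \<le> Suc (card (W \<inter> V - {x}))"
    by (cases "x \<in> W \<inter> V") (simp_all add: card_Diff1_le card_gt_0_iff le_SucI)
  also have "W \<inter> V - {x} = W \<inter> (V - {x})" by blast
  finally show ?thesis
    using W card_le_rank[of W "V - {x}"] by (auto simp: max_feasible_def)
qed

lemma essential_iff_rank_Diff_less:
  assumes "z \<in> V"
  shows "z \<in> essential I V \<longleftrightarrow> rank I (V - {z}) < rank I V"
proof
  assume ess: "z \<in> essential I V"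
  show "rank I (V - {z}) < rank I V"
  proof (rule ccontr)
    assume "\<not> rank I (V - {z}) < rank I V"
    obtain W where W: "max_feasible I (V - {z}) W" using ex_max_feasible by blast
    then have WI: "W \<in> I" by (simp add: max_feasible_def)
    have card_W: "card (W \<inter> (V - {z})) \<ge> rank I V"
      using W \<open>\<not> rank I (V - {z}) < rank I V\<close> by (simp add: max_feasible_def)
    have "z \<notin> W"
    proof
      assume "z \<in> W"
      then have "card (W \<inter> (V - {z})) < card (W \<inter> V)"
        using assms finite_feasible[OF WI] by (intro psubset_card_mono) auto
      then show False using card_W card_le_rank[OF WI, of V] by simp
    qed
    then have "W \<inter> (V - {z}) = W \<inter> V" by blast
    then have "max_feasible I V W"
      using WI card_W card_le_rank[OF WI, of V] by (simp add: max_feasible_def)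
    then show False using ess \<open>z \<notin> W\<close> by (auto simp: essential_def)
  qed
next
  assume less: "rank I (V - {z}) < rank I V"
  have "z \<in> W" if W: "max_feasible I V W" for W
  proof (rule ccontr)
    assume "z \<notin> W"
    then have "W \<inter> (V - {z}) = W \<inter> V" by blast
    then show False
      using W less card_le_rank[of W "V - {z}"] by (auto simp: max_feasible_def)
  qed
  then show "z \<in> essential I V" using assms by (simp add: essential_def)
qed

lemma essential_Diff_singleton_subset:
  assumes "x \<in> essential I V"
  shows "essential I (V - {x}) \<subseteq> essential I V - {x}"
proof
  fix i assume i: "i \<in> essential I (V - {x})"
  have xV: "x \<in> V" and less: "rank I (V - {x}) < rank I V"
    using assms essential_iff_rank_Diff_less by (auto simp: essential_def)
  have "max_feasible I (V - {x}) W" if W: "max_feasible I V W" for W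
  proof -
    have WI: "W \<in> I" and "x \<in> W" using W assms by (auto simp: max_feasible_def essential_def)
    then have "card (W \<inter> (V - {x})) = rank I V - 1"
      using W xV finite_feasible[OF WI]
      by (simp add: max_feasible_def Int_Diff[symmetric] card_Diff_singleton)
    then show ?thesis using WI less card_le_rank[OF WI, of "V - {x}"]
      by (simp add: max_feasible_def)
  qed
  then show "i \<in> essential I V - {x}" using i by (auto simp: essential_def)
qed

lemma not_matroid_augmentation_fails:
  assumes "\<not> is_matroid U I"
  shows "\<exists>V\<subseteq>U. augmentation_fails I V"
proof -
  obtain A B where AB: "A \<in> I" "B \<in> I" "card B < card A"
    and no_augment: "\<forall>x\<in>A - B. insert x B \<notin> I"
    using assms downward_closed unfolding is_matroid_def by blast
  have "A \<inter> (A \<union> B) = A" by blast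
  then have "card A \<le> rank I (A \<union> B)" using card_le_rank[OF \<open>A \<in> I\<close>, of "A \<union> B"] by simp
  then have "augmentation_fails I (A \<union> B)"
    unfolding augmentation_fails_def using AB no_augment by (intro bexI[of _ B]) auto
  moreover have "A \<union> B \<subseteq> U" using AB feasible_subset_ground by blast
  ultimately show ?thesis by blast
qed

lemma card_essential_Diff_singleton_le:
  assumes "x \<in> essential I V" "y \<in> essential I V" "x \<noteq> y" "y \<notin> essential I (V - {x})"
  shows "card (essential I (V - {x})) + 2 \<le> card (essential I V)"
proof -
  have "essential I (V - {x}) \<subseteq> essential I V - {x, y}"
    using essential_Diff_singleton_subset[OF assms(1)] assms(4) by blast
  then have "card (essential I (V - {x})) \<le> card (essential I V - {x, y})"
    using finite_essential by (intro card_mono) auto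
  also have "\<dots> = card (essential I V) - 2"
    using assms finite_essential by (simp add: card_Diff_subset)
  finally show ?thesis
    using card_mono[OF finite_essential, of "{x, y}" V] assms by simp
qed

lemma two_le_card_Diff_maximal:
  assumes "A \<in> I" "B \<in> I" "A \<subseteq> V" "card B < card A" and maximal: "\<forall>y\<in>V - B. insert y B \<notin> I"
  shows "2 \<le> card (A - B)"
proof -
  have finite_A: "finite A" and finite_B: "finite B" using assms finite_feasible by auto
  have "\<not> A \<subseteq> B" using assms card_mono[OF finite_B, of A] by linarith
  then obtain z where z: "z \<in> A - B" by blast
  have "\<not> B \<subseteq> A"
  proof
    assume "B \<subseteq> A"
    then have "insert z B \<in> I" using z feasible_subset[OF \<open>A \<in> I\<close>] by auto
    then show False using maximal z \<open>A \<subseteq> V\<close> by auto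
  qed
  then have "card (A \<inter> B) < card B" using finite_B by (intro psubset_card_mono) auto
  then show ?thesis using assms finite_A by (simp add: card_Diff_subset_Int)
qed

lemma minimal_augmentation_failure_rank_Diff:
  assumes minimal: "\<forall>z\<in>V. \<not> augmentation_fails I (V - {z})"
    and B: "B \<in> I" "B \<subseteq> V" and maximal: "\<forall>y\<in>V - B. insert y B \<notin> I" and z: "z \<in> V - B"
  shows "rank I (V - {z}) = card B"
proof -
  have "\<not> card B < rank I (V - {z})"
    using minimal z B maximal by (auto simp: augmentation_fails_def)
  moreover have "B \<inter> (V - {z}) = B" using z B by blast
  then have "card B \<le> rank I (V - {z})"
    using card_le_rank[OF \<open>B \<in> I\<close>, of "V - {z}"] by simp
  ultimately show ?thesis by simp
qed

lemma minimal_augmentation_failure_essential_drop: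
  assumes fails: "augmentation_fails I V" and minimal: "\<forall>z\<in>V. \<not> augmentation_fails I (V - {z})"
  shows "\<exists>x\<in>V. card (essential I (V - {x})) + 2 \<le> card (essential I V)"
proof -
  obtain B where B: "B \<in> I" "B \<subseteq> V" "card B < rank I V" and maximal: "\<forall>y\<in>V - B. insert y B \<notin> I"
    using fails by (auto simp: augmentation_fails_def)
  note rank_Diff = minimal_augmentation_failure_rank_Diff[OF minimal B(1,2) maximal]
  obtain A where A: "A \<in> I" "A \<subseteq> V" "card A = rank I V" using ex_max_feasible_subset by blast
  have A_B_essential: "A - B \<subseteq> essential I V"
    using A B rank_Diff essential_iff_rank_Diff_less by auto
  have "2 \<le> card (A - B)" using two_le_card_Diff_maximal A B maximal by simp
  then obtain x y where xy: "x \<in> A - B" "y \<in> A - B" "x \<noteq> y"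
    by (metis One_nat_def Suc_1 card_le_Suc_iff insertCI not_less_eq_eq zero_le)
  have "B \<inter> (V - {x}) = B" using B xy by blast
  moreover have "rank I (V - {x}) = card B" using rank_Diff xy A by blast
  ultimately have "max_feasible I (V - {x}) B" using B by (simp add: max_feasible_def)
  then have "y \<notin> essential I (V - {x})" using xy by (auto simp: essential_def)
  then show ?thesis
    using card_essential_Diff_singleton_le A_B_essential xy A by blast
qed

end

theorem mainTheorem8:
  fixes U :: "'a set" and I :: "'a set set"
  assumes "finite U"
    and "downward_closed U I"
    and "\<not> is_matroid U I"
  shows "\<exists>V x. V \<subseteq> U \<and> x \<in> V \<and>
           (\<forall>W1 W2. vcg_alloc I (unit_bids (V - {x})) W1 \<longrightarrow> vcg_alloc I (unit_bids V) W2 \<longrightarrow>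
              vcg_revenue I (unit_bids (V - {x})) W1 > vcg_revenue I (unit_bids V) W2)"
proof -
  interpret finite_downward_closed U I using assms(1,2) by unfold_locales
  obtain V0 where "V0 \<subseteq> U" "augmentation_fails I V0"
    using not_matroid_augmentation_fails[OF assms(3)] by blast
  then obtain V where V: "V \<subseteq> U" "augmentation_fails I V"
    and smallest: "\<forall>V'. V' \<subseteq> U \<and> augmentation_fails I V' \<longrightarrow> card V \<le> card V'"
    using ex_has_least_nat[of "\<lambda>V. V \<subseteq> U \<and> augmentation_fails I V" V0 card] by blast
  have "\<not> augmentation_fails I (V - {z})" if "z \<in> V" for z
  proof -
    have "card (V - {z}) < card V"
      using that V(1) finite_ground by (meson card_Diff1_less finite_subset)
    moreover have "V - {z} \<subseteq> U" using V(1) by blast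
    ultimately show ?thesis using smallest by (meson not_le)
  qed
  then obtain x where "x \<in> V" and drop: "card (essential I (V - {x})) + 2 \<le> card (essential I V)"
    using minimal_augmentation_failure_essential_drop[OF V(2)] by blast
  moreover have "vcg_revenue I (unit_bids (V - {x})) W1 > vcg_revenue I (unit_bids V) W2"
    if "vcg_alloc I (unit_bids (V - {x})) W1" "vcg_alloc I (unit_bids V) W2" for W1 W2
    using vcg_revenue_unit_bids[OF that(1)] vcg_revenue_unit_bids[OF that(2)] drop
      rank_le_rank_Diff_singleton[of V x] by linarith
  ultimately show ?thesis using V(1) by blast
qed

end
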